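(* Let $m\ge 3$, $n=2m$, and let $D=(X,O)$ be a marginally coupled QS design with $n$ rows. Suppose $d_H(O)\ge m-2$ and the number of unordered pairs of distinct rows of $O$ at Hamming distance exactly $m-2$ is smaller than $m^2/2$. Then $$d_1(X)\le\left\lfloor\frac{(m+1)m}{3}\right\rfloor,\qquad d_2(X)\le\sqrt{\left\lfloor\frac{m^2(m+1)}{6}\right\rfloor}.$$
   Context: $X$ is a $2m\times m$ LHD (each column a permutation of $\{1,\ldots,2m\}$), $O$ is a $2m\times m$ sequence design (each row a permutation of $\{1,\ldots,m\}$). $D=(X,O)$ is marginally coupled if for every column $u$ of $O$, every component $c\in\{1,\ldots,m\}$ and every column $j$ of $X$, the multiset $\{\lfloor (X_{rj}-1)/m\rfloor: O_{ru}=c\}$ equals $\{0,1\}$. $d_q(X)=\min_{i<j}\{\sum_k|x_{ik}-x_{jk}|^q\}^{1/q}$; $d_H(O)$ is the minimum over distinct row pairs of the number of positions where the rows differ. *)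

theory Defs
  imports "HOL-Analysis.Analysis"
begin

text \<open>Designs are indexed from 0: rows r < n, columns k < m.
  X r k is the entry of the LHD X in row r, column k (values 1..n);
  S r u is the entry of the sequence design O (here S) in row r, column u (values 1..m).\<close>

definition is_LHD :: "nat \<Rightarrow> nat \<Rightarrow> (nat \<Rightarrow> nat \<Rightarrow> nat) \<Rightarrow> bool" where
  "is_LHD n p X \<longleftrightarrow> (\<forall>k<p. bij_betw (\<lambda>r. X r k) {..<n} {1..n})"

definition is_sequence_design :: "nat \<Rightarrow> nat \<Rightarrow> (nat \<Rightarrow> nat \<Rightarrow> nat) \<Rightarrow> bool" where
  "is_sequence_design n m S \<longleftrightarrow> (\<forall>r<n. bij_betw (\<lambda>u. S r u) {..<m} {1..m})"

definition marginally_coupled :: "nat \<Rightarrow> (nat \<Rightarrow> nat \<Rightarrow> nat) \<Rightarrow> (nat \<Rightarrow> nat \<Rightarrow> nat) \<Rightarrow> bool" where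
  "marginally_coupled m X S \<longleftrightarrow>
     is_LHD (2*m) m X \<and> is_sequence_design (2*m) m S \<and>
     (\<forall>u<m. \<forall>c\<in>{1..m}. \<forall>j<m.
        image_mset (\<lambda>r. (X r j - 1) div m) (mset_set {r. r < 2*m \<and> S r u = c}) = {#0, 1#})"

definition row_dist_q :: "real \<Rightarrow> nat \<Rightarrow> (nat \<Rightarrow> nat \<Rightarrow> nat) \<Rightarrow> nat \<Rightarrow> nat \<Rightarrow> real" where
  "row_dist_q q p X i j = (\<Sum>k<p. \<bar>real (X i k) - real (X j k)\<bar> powr q) powr (1/q)"

definition d_q :: "real \<Rightarrow> nat \<Rightarrow> nat \<Rightarrow> (nat \<Rightarrow> nat \<Rightarrow> nat) \<Rightarrow> real" where
  "d_q q n p X = Min {row_dist_q q p X i j | i j. i < j \<and> j < n}"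

definition hamming_rows :: "nat \<Rightarrow> (nat \<Rightarrow> nat \<Rightarrow> nat) \<Rightarrow> nat \<Rightarrow> nat \<Rightarrow> nat" where
  "hamming_rows m S i j = card {u. u < m \<and> S i u \<noteq> S j u}"

definition d_H :: "nat \<Rightarrow> nat \<Rightarrow> (nat \<Rightarrow> nat \<Rightarrow> nat) \<Rightarrow> nat" where
  "d_H n m S = Min {hamming_rows m S i j | i j. i < j \<and> j < n}"

definition num_pairs_at_dist :: "nat \<Rightarrow> nat \<Rightarrow> (nat \<Rightarrow> nat \<Rightarrow> nat) \<Rightarrow> nat \<Rightarrow> nat" where
  "num_pairs_at_dist n m S h = card {(i, j). i < j \<and> j < n \<and> hamming_rows m S i j = h}"

end

theory Submission
  imports Defs
begin

(* Let level r j = floor((X r j - 1) / m) in {0, 1}.  Marginal coupling says that for every column u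
   of O and symbol c exactly two rows carry c in column u, and their level vectors are complementary.
   Hence rows agreeing somewhere in O have complementary levels in every column of X, every row has
   exactly m agreements with the other rows, and d_H(O) >= m - 2 allows at most two agreements per pair.
   Compare the level patterns of two columns i and j: a row in the class (a, b) of level values has all
   its agreement partners in the class (1 - a, 1 - b), which therefore has at least m/2 rows.  If the
   patterns were neither equal nor complementary, all four classes would have exactly m/2 rows and all
   m^2/2 cross pairs would agree in two positions, i.e. lie at Hamming distance m - 2, contradicting the
   hypothesis.  So the m rows of level 0 in column 0 have a common level in every column, and there
   their entries form a translate of a permutation of 1..m.  Averaging the distances over pairs of
   these rows gives m(m+1)/3 and m^2(m+1)/6, and integrality of the distances gives the floors. *)

lemma sum_atLeastAtMost_of_nat:
  "2 * (\<Sum>a\<in>{1..n}. real a) = real n * (real n + 1)"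
  by (induction n) (simp_all add: atLeastAtMostSuc_conv algebra_simps)

lemma sum_atLeastAtMost_of_nat_squared:
  "6 * (\<Sum>a\<in>{1..n}. real a ^ 2) = real n * (real n + 1) * (2 * real n + 1)"
  by (induction n) (simp_all add: atLeastAtMostSuc_conv algebra_simps power2_eq_square)

lemma sum_pairs_atLeastAtMost_Suc:
  fixes f :: "nat \<Rightarrow> nat \<Rightarrow> real"
  assumes "\<And>a b. f a b = f b a" and "\<And>a. f a a = 0"
  shows "(\<Sum>a\<in>{1..Suc n}. \<Sum>b\<in>{1..Suc n}. f a b)
       = (\<Sum>a\<in>{1..n}. \<Sum>b\<in>{1..n}. f a b) + 2 * (\<Sum>a\<in>{1..n}. f a (Suc n))"
  using assms by (simp add: atLeastAtMostSuc_conv sum.distrib)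

lemma sum_pairs_abs_diff:
  "3 * (\<Sum>a\<in>{1..n}. \<Sum>b\<in>{1..n}. \<bar>real a - real b\<bar>) = real n ^ 3 - real n"
proof (induction n)
  case (Suc n)
  have "(\<Sum>a\<in>{1..n}. \<bar>real a - real (Suc n)\<bar>) = (\<Sum>a\<in>{1..n}. real (Suc n) - real a)"
    by (rule sum.cong) auto
  then have "2 * (\<Sum>a\<in>{1..n}. \<bar>real a - real (Suc n)\<bar>) = real n * (real n + 1)"
    using sum_atLeastAtMost_of_nat[of n] by (simp add: sum_subtractf algebra_simps)
  with Suc.IH show ?case
    by (subst sum_pairs_atLeastAtMost_Suc) (simp_all add: abs_minus_commute algebra_simps power3_eq_cube)
qed simp

lemma sum_pairs_diff_squared:
  "6 * (\<Sum>a\<in>{1..n}. \<Sum>b\<in>{1..n}. (real a - real b)^2) = real n ^ 4 - real n ^ 2"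
proof (induction n)
  case (Suc n)
  have "(\<Sum>a\<in>{1..n}. (real a - real (Suc n))^2)
      = (\<Sum>a\<in>{1..n}. real a ^ 2) - 2 * real (Suc n) * (\<Sum>a\<in>{1..n}. real a)
        + real n * real (Suc n) ^ 2"
    by (simp add: power2_diff sum.distrib sum_subtractf sum_distrib_left algebra_simps)
  then have "6 * (\<Sum>a\<in>{1..n}. (real a - real (Suc n))^2) = real n * (real n + 1) * (2 * real n + 1)"
    using sum_atLeastAtMost_of_nat[of n] sum_atLeastAtMost_of_nat_squared[of n]
    by (simp add: algebra_simps power2_eq_square)
  with Suc.IH show ?case
    by (subst sum_pairs_atLeastAtMost_Suc)
      (simp_all add: power2_commute algebra_simps power2_eq_square power4_eq_xxxx)
qed simp

lemma sum_pairs_reindex_bij_betw: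
  assumes "bij_betw h T B"
  shows "(\<Sum>r\<in>T. \<Sum>r'\<in>T. f (h r) (h r')) = (\<Sum>a\<in>B. \<Sum>b\<in>B. f a b)"
proof -
  have "(\<Sum>r\<in>T. \<Sum>r'\<in>T. f (h r) (h r')) = (\<Sum>r\<in>T. \<Sum>b\<in>B. f (h r) b)"
    by (simp add: sum.reindex_bij_betw[OF assms])
  also have "\<dots> = (\<Sum>a\<in>B. \<Sum>b\<in>B. f a b)"
    by (rule sum.reindex_bij_betw[OF assms])
  finally show ?thesis .
qed

lemma card_preimage_bij_betw:
  assumes "bij_betw f A B" and "C \<subseteq> B"
  shows "card {x \<in> A. f x \<in> C} = card C"
proof (rule bij_betw_same_card)
  show "bij_betw f {x \<in> A. f x \<in> C} C"
    using assms unfolding bij_betw_def inj_on_def by blast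
qed

lemma card_mult_le_sum_pairs:
  fixes g :: "'a \<Rightarrow> 'a \<Rightarrow> real"
  assumes "finite T" and "\<And>r. r \<in> T \<Longrightarrow> g r r = 0"
    and "\<And>r r'. r \<in> T \<Longrightarrow> r' \<in> T \<Longrightarrow> r \<noteq> r' \<Longrightarrow> c \<le> g r r'"
  shows "real (card T) * (real (card T) - 1) * c \<le> (\<Sum>r\<in>T. \<Sum>r'\<in>T. g r r')"
proof -
  have "(real (card T) - 1) * c \<le> (\<Sum>r'\<in>T. g r r')" if r: "r \<in> T" for r
  proof -
    have "(real (card T) - 1) * c = (\<Sum>r'\<in>T - {r}. c)"
      using card.remove[OF assms(1) r] by simp
    also have "\<dots> \<le> (\<Sum>r'\<in>T - {r}. g r r')"
      using assms(3) r by (intro sum_mono) auto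
    also have "\<dots> = (\<Sum>r'\<in>T. g r r')"
      using sum.remove[OF assms(1) r, of "g r"] assms(2)[OF r] by simp
    finally show ?thesis .
  qed
  then have "(\<Sum>r\<in>T. (real (card T) - 1) * c) \<le> (\<Sum>r\<in>T. \<Sum>r'\<in>T. g r r')"
    by (rule sum_mono)
  then show ?thesis
    by (simp add: mult.assoc)
qed

lemma of_nat_le_of_nat_div:
  assumes "real k * real N \<le> real M" and "0 < k"
  shows "real N \<le> real (M div k)"
  using assms by (simp add: less_eq_div_iff_mult_less_eq mult.commute flip: of_nat_mult)

lemma abs_diff_of_nat: "\<bar>real a - real b\<bar> = real (max a b - min a b)"
  by (simp add: of_nat_diff)

lemma finite_pair_values: "finite {g i j | i j. i < j \<and> j < (n::nat)}"
proof (rule finite_subset)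
  show "{g i j | i j. i < j \<and> j < n} \<subseteq> (\<lambda>(i, j). g i j) ` ({..<n} \<times> {..<n})"
    by force
qed simp

lemma Min_pairs_le:
  fixes g :: "nat \<Rightarrow> nat \<Rightarrow> 'a::linorder"
  assumes "\<And>i j. g i j = g j i" and "i < n" "j < n" "i \<noteq> j"
  shows "Min {g i j | i j. i < j \<and> j < n} \<le> g i j"
proof -
  have "g (min i j) (max i j) \<in> {g i j | i j. i < j \<and> j < n}"
    using assms(2-4) by (force simp: min_def max_def)
  then have "Min {g i j | i j. i < j \<and> j < n} \<le> g (min i j) (max i j)"
    using finite_pair_values by (rule Min_le[rotated])
  then show ?thesis
    using assms(1) by (simp add: min_def max_def split: if_splits)
qed

lemma Min_pairs_in:
  assumes "2 \<le> (n::nat)"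
  shows "Min {g i j | i j. i < j \<and> j < n} \<in> {g i j | i j. i < j \<and> j < n}"
proof (rule Min_in)
  show "{g i j | i j. i < j \<and> j < n} \<noteq> {}"
    using assms by force
qed (rule finite_pair_values)

lemma row_dist_q_commute: "row_dist_q q p X i j = row_dist_q q p X j i"
  unfolding row_dist_q_def by (simp add: abs_minus_commute)

lemma row_dist_q_1: "row_dist_q 1 p X i j = (\<Sum>k<p. \<bar>real (X i k) - real (X j k)\<bar>)"
  unfolding row_dist_q_def by (simp add: sum_nonneg)

lemma row_dist_q_2: "row_dist_q 2 p X i j = sqrt (\<Sum>k<p. (real (X i k) - real (X j k))^2)"
  unfolding row_dist_q_def by (simp add: powr_half_sqrt sum_nonneg)

lemma d_q_le_row_dist_q: "i < n \<Longrightarrow> j < n \<Longrightarrow> i \<noteq> j \<Longrightarrow> d_q q n p X \<le> row_dist_q q p X i j"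
  unfolding d_q_def by (rule Min_pairs_le) (simp_all add: row_dist_q_commute)

lemma d_q_attained: "2 \<le> n \<Longrightarrow> \<exists>i j. d_q q n p X = row_dist_q q p X i j"
  using Min_pairs_in[of n "row_dist_q q p X"] unfolding d_q_def by blast

lemma hamming_rows_commute: "hamming_rows m S i j = hamming_rows m S j i"
  unfolding hamming_rows_def by (simp add: eq_commute)

lemma hamming_rows_add_agreements:
  "hamming_rows m S i j + card {u. u < m \<and> S i u = S j u} = m"
proof -
  have "card {u. u < m \<and> S i u \<noteq> S j u} + card {u. u < m \<and> S i u = S j u}
      = card ({u. u < m \<and> S i u \<noteq> S j u} \<union> {u. u < m \<and> S i u = S j u})"
    by (rule card_Un_disjoint[symmetric]) auto
  also have "{u. u < m \<and> S i u \<noteq> S j u} \<union> {u. u < m \<and> S i u = S j u} = {..<m}"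
    by auto
  finally show ?thesis
    unfolding hamming_rows_def by simp
qed

lemma card_le_num_pairs_at_dist:
  assumes "U \<subseteq> {..<n} \<times> {..<n}"
    and "\<And>a b. (a, b) \<in> U \<Longrightarrow> (b, a) \<notin> U \<and> hamming_rows m S a b = h"
  shows "card U \<le> num_pairs_at_dist n m S h"
proof -
  let ?sort = "\<lambda>(a::nat, b). (min a b, max a b)"
  have "inj_on ?sort U"
  proof (rule inj_onI)
    fix x y assume xy: "x \<in> U" "y \<in> U" "?sort x = ?sort y"
    obtain a b c d where ab: "x = (a, b)" and cd: "y = (c, d)"
      by fastforce
    have "min a b = min c d" "max a b = max c d"
      using xy(3) unfolding ab cd by simp_all
    then have "(a, b) = (c, d) \<or> (a, b) = (d, c)"
      by (cases "a \<le> b"; cases "c \<le> d") (simp_all add: min_def max_def)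
    then show "x = y"
      using xy(1,2) assms(2) unfolding ab cd by blast
  qed
  moreover have "?sort ` U \<subseteq> {(i, j). i < j \<and> j < n \<and> hamming_rows m S i j = h}"
  proof clarify
    fix a b assume ab: "(a, b) \<in> U"
    then have "a \<noteq> b" "a < n" "b < n" "hamming_rows m S a b = h"
      using assms by blast+
    then show "min a b < max a b \<and> max a b < n \<and> hamming_rows m S (min a b) (max a b) = h"
      by (cases "a \<le> b") (auto simp: min_def max_def hamming_rows_commute)
  qed
  moreover have "finite {(i, j). i < j \<and> j < n \<and> hamming_rows m S i j = h}"
    by (rule finite_subset[of _ "{..<n} \<times> {..<n}"]) auto
  ultimately show ?thesis
    unfolding num_pairs_at_dist_def by (simp add: card_inj_on_le)
qed

locale coupled_design =
  fixes m :: nat and X S :: "nat \<Rightarrow> nat \<Rightarrow> nat"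
  assumes coupled: "marginally_coupled m X S"
begin

definition level :: "nat \<Rightarrow> nat \<Rightarrow> nat"
  where "level r j = (X r j - 1) div m"

definition agreements :: "nat \<Rightarrow> nat \<Rightarrow> nat"
  where "agreements r r' = card {u. u < m \<and> S r u = S r' u}"

lemma bij_betw_column: "j < m \<Longrightarrow> bij_betw (\<lambda>r. X r j) {..<2*m} {1..2*m}"
  using coupled unfolding marginally_coupled_def is_LHD_def by blast

lemma bij_betw_row: "r < 2*m \<Longrightarrow> bij_betw (S r) {..<m} {1..m}"
  using coupled unfolding marginally_coupled_def is_sequence_design_def by blast

lemma image_mset_level:
  "u < m \<Longrightarrow> c \<in> {1..m} \<Longrightarrow> j < m \<Longrightarrow>
    image_mset (\<lambda>r. level r j) (mset_set {r. r < 2*m \<and> S r u = c}) = {#0, 1#}"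
  using coupled unfolding marginally_coupled_def level_def by blast

lemma column_range: "r < 2*m \<Longrightarrow> j < m \<Longrightarrow> X r j \<in> {1..2*m}"
  using bij_betw_column[of j] by (auto simp: bij_betw_def)

lemma level_eq_iff:
  assumes "r < 2*m" "j < m"
  shows "level r j = b \<longleftrightarrow> X r j \<in> {b*m<..b*m+m}"
proof -
  have "1 \<le> X r j" "0 < m"
    using column_range[OF assms] assms(2) by auto
  have "level r j = b \<longleftrightarrow> b \<le> level r j \<and> level r j < Suc b"
    by linarith
  also have "\<dots> \<longleftrightarrow> b * m \<le> X r j - 1 \<and> X r j - 1 < Suc b * m"
    unfolding level_def using \<open>0 < m\<close> by (simp add: less_eq_div_iff_mult_less_eq div_less_iff_less_mult)
  finally show ?thesis
    using \<open>1 \<le> X r j\<close> by auto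
qed

lemma level_le_1:
  assumes "r < 2*m" "j < m"
  shows "level r j \<le> 1"
proof -
  have "X r j - 1 < 2 * m" "0 < m"
    using column_range[OF assms] assms(2) by auto
  then show ?thesis
    unfolding level_def by (simp add: div_less_iff_less_mult less_Suc_eq_le[symmetric])
qed

lemma card_level:
  assumes "j < m" "b \<le> 1"
  shows "card {r. r < 2*m \<and> level r j = b} = m"
proof -
  have "{r. r < 2*m \<and> level r j = b} = {r \<in> {..<2*m}. X r j \<in> {b*m<..b*m+m}}"
    using level_eq_iff[OF _ assms(1)] by auto
  also have "card \<dots> = card {b*m<..b*m+m}"
  proof (intro card_preimage_bij_betw[OF bij_betw_column])
    show "{b*m<..b*m+m} \<subseteq> {1..2*m}"
      using assms(2) by (cases b) auto
  qed (rule assms(1))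
  finally show ?thesis
    by simp
qed

lemma rows_sharing_symbol:
  assumes "u < m" "c \<in> {1..m}"
  obtains r r' where "{r. r < 2*m \<and> S r u = c} = {r, r'}" "r \<noteq> r'"
    "\<And>j. j < m \<Longrightarrow> level r' j = 1 - level r j"
proof -
  let ?M = "{r. r < 2*m \<and> S r u = c}"
  have "card ?M = 2"
    using arg_cong[OF image_mset_level[OF assms assms(1)], of size] by simp
  then obtain r r' where rr': "?M = {r, r'}" "r \<noteq> r'"
    by (auto simp: card_2_iff)
  have "level r' j = 1 - level r j" if "j < m" for j
  proof -
    have "{#level r j, level r' j#} = {#0, 1#}"
      using image_mset_level[OF assms that] rr' by simp
    then show ?thesis
      by (auto simp: add_eq_conv_ex)
  qed
  with rr' that show ?thesis
    by blast
qed

lemma symbol_range: "r < 2*m \<Longrightarrow> u < m \<Longrightarrow> S r u \<in> {1..m}"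
  using bij_betw_row[of r] by (auto simp: bij_betw_def)

lemma level_complement:
  assumes "r < 2*m" "r' < 2*m" "r \<noteq> r'" "0 < agreements r r'" "j < m"
  shows "level r' j = 1 - level r j"
proof -
  have "{u. u < m \<and> S r u = S r' u} \<noteq> {}"
    using assms(4) unfolding agreements_def by (metis card.empty less_irrefl)
  then obtain u where u: "u < m" "S r u = S r' u"
    by blast
  obtain a b where ab: "{s. s < 2*m \<and> S s u = S r u} = {a, b}"
    and level_ab: "level b j = 1 - level a j"
    using rows_sharing_symbol[OF u(1) symbol_range[OF assms(1) u(1)]] assms(5) by metis
  have "r \<in> {s. s < 2*m \<and> S s u = S r u}" "r' \<in> {s. s < 2*m \<and> S s u = S r u}"
    using assms(1,2) u(2) by simp_all
  then have "r = a \<and> r' = b \<or> r = b \<and> r' = a"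
    using assms(3) unfolding ab by blast
  then show ?thesis
    using level_ab level_le_1[OF assms(2,5)] by auto
qed

lemma card_other_rows_sharing_symbol:
  assumes "r < 2*m" "u < m"
  shows "card {r' \<in> {..<2*m} - {r}. S r' u = S r u} = 1"
proof -
  obtain a b where ab: "{s. s < 2*m \<and> S s u = S r u} = {a, b}" "a \<noteq> b"
    using rows_sharing_symbol[OF assms(2) symbol_range[OF assms]] by metis
  have "r \<in> {s. s < 2*m \<and> S s u = S r u}"
    using assms(1) by simp
  then have "r = a \<or> r = b"
    unfolding ab by blast
  moreover have "{r' \<in> {..<2*m} - {r}. S r' u = S r u} = {a, b} - {r}"
    unfolding ab[symmetric] by auto
  ultimately show ?thesis
    using ab(2) by auto
qed

lemma sum_agreements:
  assumes "r < 2*m"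
  shows "(\<Sum>r'\<in>{..<2*m} - {r}. agreements r r') = m"
proof -
  have agreements_eq: "agreements r r' = (\<Sum>u<m. of_bool (S r' u = S r u))" for r'
    unfolding agreements_def by (simp add: Int_def eq_commute)
  have "(\<Sum>r'\<in>{..<2*m} - {r}. agreements r r')
      = (\<Sum>r'\<in>{..<2*m} - {r}. \<Sum>u<m. of_bool (S r' u = S r u))"
    by (simp only: agreements_eq)
  also have "\<dots> = (\<Sum>u<m. \<Sum>r'\<in>{..<2*m} - {r}. of_bool (S r' u = S r u))"
    by (rule sum.swap)
  also have "\<dots> = (\<Sum>u<m. 1)"
    using card_other_rows_sharing_symbol[OF assms] by (simp add: Int_def)
  finally show ?thesis
    by simp
qed

lemma hamming_rows_if_agreements_eq_2: "agreements r r' = 2 \<Longrightarrow> hamming_rows m S r r' = m - 2"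
  using hamming_rows_add_agreements[of m S r r'] unfolding agreements_def by linarith

lemma sum_agreements_partners:
  assumes "r < 2*m" "G \<subseteq> {..<2*m}" "r \<notin> G"
    and "\<And>r'. r' < 2*m \<Longrightarrow> r' \<noteq> r \<Longrightarrow> 0 < agreements r r' \<Longrightarrow> r' \<in> G"
  shows "(\<Sum>r'\<in>G. agreements r r') = m"
proof -
  have "(\<Sum>r'\<in>G. agreements r r') = (\<Sum>r'\<in>{..<2*m} - {r}. agreements r r')"
    using assms by (intro sum.mono_neutral_left) auto
  then show ?thesis
    using sum_agreements[OF assms(1)] by simp
qed

definition level_class :: "nat \<Rightarrow> nat \<Rightarrow> nat \<Rightarrow> nat \<Rightarrow> nat set"
  where "level_class i j a b = {r. r < 2*m \<and> level r i = a \<and> level r j = b}"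

lemma level_class_commute: "level_class i j a b = level_class j i b a"
  unfolding level_class_def by auto

lemma card_level_classes:
  assumes "i < m" "j < m" "a \<le> 1"
  shows "card (level_class i j a 0) + card (level_class i j a 1) = m"
proof -
  have "card (level_class i j a 0) + card (level_class i j a 1)
      = card (level_class i j a 0 \<union> level_class i j a 1)"
    by (rule card_Un_disjoint[symmetric]) (auto simp: level_class_def)
  also have "level_class i j a 0 \<union> level_class i j a 1 = {r. r < 2*m \<and> level r i = a}"
    using level_le_1[OF _ assms(2)] by (auto simp: level_class_def le_Suc_eq)
  finally show ?thesis
    using card_level[OF assms(1,3)] by simp
qed

lemma card_level_class_opposite:
  assumes "i < m" "j < m"
  shows "card (level_class i j 1 1) = card (level_class i j 0 0)"
    and "card (level_class i j 1 0) = card (level_class i j 0 1)"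
proof -
  have "card (level_class i j 0 0) + card (level_class i j 1 0) = m"
    and "card (level_class i j 0 1) + card (level_class i j 1 1) = m"
    using card_level_classes[OF assms(2,1), of 0] card_level_classes[OF assms(2,1), of 1]
    unfolding level_class_commute[of j i] by simp_all
  then show "card (level_class i j 1 1) = card (level_class i j 0 0)"
    and "card (level_class i j 1 0) = card (level_class i j 0 1)"
    using card_level_classes[OF assms, of 0] by simp_all
qed

lemma level_class_partner:
  assumes "r \<in> level_class i j a b" "r' < 2*m" "r' \<noteq> r" "0 < agreements r r'" "i < m" "j < m"
  shows "r' \<in> level_class i j (1 - a) (1 - b)"
  using assms level_complement[of r r'] unfolding level_class_def by auto

end

locale coupled_design_few_close_pairs = coupled_design +
  assumes hamming_bound: "d_H (2*m) m S \<ge> m - 2"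
    and few_close_pairs: "real (num_pairs_at_dist (2*m) m S (m - 2)) < real m ^ 2 / 2"
begin

lemma agreements_le_2:
  assumes "r < 2*m" "r' < 2*m" "r \<noteq> r'"
  shows "agreements r r' \<le> 2"
proof -
  have "d_H (2*m) m S \<le> hamming_rows m S r r'"
    unfolding d_H_def using assms by (intro Min_pairs_le) (auto intro: hamming_rows_commute)
  then show ?thesis
    using hamming_bound hamming_rows_add_agreements[of m S r r'] unfolding agreements_def by linarith
qed

lemma card_partners_bound:
  assumes "r < 2*m" "G \<subseteq> {..<2*m}" "r \<notin> G"
    and "\<And>r'. r' < 2*m \<Longrightarrow> r' \<noteq> r \<Longrightarrow> 0 < agreements r r' \<Longrightarrow> r' \<in> G"
  shows "m \<le> 2 * card G" and "2 * card G = m \<Longrightarrow> r' \<in> G \<Longrightarrow> agreements r r' = 2"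
proof -
  have le2: "agreements r r' \<le> 2" if "r' \<in> G" for r'
    using agreements_le_2 assms(1-3) that by blast
  have sum: "(\<Sum>r'\<in>G. agreements r r') = m"
    by (rule sum_agreements_partners[OF assms])
  then show "m \<le> 2 * card G"
    using sum_bounded_above[of G "agreements r" 2] le2 by (simp add: mult.commute)
  show "agreements r r' = 2" if "2 * card G = m" "r' \<in> G"
  proof (rule ccontr)
    assume "agreements r r' \<noteq> 2"
    then have "(\<Sum>r'\<in>G. agreements r r') < (\<Sum>r'\<in>G. 2)"
      using le2 that(2) finite_subset[OF assms(2)]
      by (intro sum_strict_mono_ex1) (auto simp: order.strict_iff_order)
    then show False
      using sum that(1) by simp
  qed
qed

lemma level_class_opposite_bound:
  assumes "r \<in> level_class i j a b" "i < m" "j < m"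
  shows "m \<le> 2 * card (level_class i j (1 - a) (1 - b))"
    and "2 * card (level_class i j (1 - a) (1 - b)) = m \<Longrightarrow> r' \<in> level_class i j (1 - a) (1 - b)
      \<Longrightarrow> agreements r r' = 2"
proof -
  let ?G = "level_class i j (1 - a) (1 - b)"
  have "r < 2*m" "level r i = a"
    using assms(1) unfolding level_class_def by auto
  moreover have "a \<noteq> 1 - a"
    by (cases a) auto
  ultimately have "r \<notin> ?G"
    unfolding level_class_def by auto
  have "?G \<subseteq> {..<2*m}"
    unfolding level_class_def by auto
  note bound = card_partners_bound[OF \<open>r < 2*m\<close> \<open>?G \<subseteq> {..<2*m}\<close> \<open>r \<notin> ?G\<close>
      level_class_partner[OF assms(1) _ _ _ assms(2,3)]]
  show "m \<le> 2 * card ?G"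
    by (rule bound(1))
  show "2 * card ?G = m \<Longrightarrow> r' \<in> ?G \<Longrightarrow> agreements r r' = 2"
    by (rule bound(2))
qed

lemma balanced_level_classes_many_close_pairs:
  assumes "i < m" "j < m"
    and "2 * card (level_class i j 0 0) = m" "2 * card (level_class i j 0 1) = m"
  shows "real m ^ 2 / 2 \<le> real (num_pairs_at_dist (2*m) m S (m - 2))"
proof -
  let ?C = "level_class i j"
  have cards: "2 * card (?C 1 1) = m" "2 * card (?C 1 0) = m"
    using assms(3,4) card_level_class_opposite[OF assms(1,2)] by simp_all
  define U where "U = ?C 0 0 \<times> ?C 1 1 \<union> ?C 0 1 \<times> ?C 1 0"
  have "card U \<le> num_pairs_at_dist (2*m) m S (m - 2)"
  proof (rule card_le_num_pairs_at_dist)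
    show "U \<subseteq> {..<2*m} \<times> {..<2*m}"
      unfolding U_def level_class_def by auto
    fix a b assume "(a, b) \<in> U"
    then consider "a \<in> ?C 0 0" "b \<in> ?C 1 1" | "a \<in> ?C 0 1" "b \<in> ?C 1 0"
      unfolding U_def by blast
    then have "agreements a b = 2"
    proof cases
      case 1
      then show ?thesis
        using level_class_opposite_bound(2)[OF 1(1) assms(1,2), of b] cards(1) by simp
    next
      case 2
      then show ?thesis
        using level_class_opposite_bound(2)[OF 2(1) assms(1,2), of b] cards(2) by simp
    qed
    moreover have "(b, a) \<notin> U"
      using \<open>(a, b) \<in> U\<close> unfolding U_def level_class_def by force
    ultimately show "(b, a) \<notin> U \<and> hamming_rows m S a b = m - 2"
      using hamming_rows_if_agreements_eq_2 by blast
  qed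
  moreover have "card U = card (?C 0 0) * card (?C 1 1) + card (?C 0 1) * card (?C 1 0)"
    unfolding U_def by (subst card_Un_disjoint) (auto simp: card_cartesian_product level_class_def)
  then have "4 * card U = (2 * card (?C 0 0)) * (2 * card (?C 1 1)) + (2 * card (?C 0 1)) * (2 * card (?C 1 0))"
    by (simp add: algebra_simps)
  then have "4 * card U = m ^ 2 + m ^ 2"
    unfolding assms(3,4) cards by (simp add: power2_eq_square)
  ultimately have "m ^ 2 \<le> 2 * num_pairs_at_dist (2*m) m S (m - 2)"
    by linarith
  then have "real (m ^ 2) \<le> real (2 * num_pairs_at_dist (2*m) m S (m - 2))"
    by (rule of_nat_mono)
  then show ?thesis
    by simp
qed

lemma levels_aligned:
  assumes "i < m" "j < m"
  shows "(\<forall>r<2*m. level r j = level r i) \<or> (\<forall>r<2*m. level r j \<noteq> level r i)"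
proof (rule ccontr)
  let ?C = "level_class i j"
  assume "\<not> ?thesis"
  then obtain r1 r2 where r1: "r1 < 2*m" "level r1 j = level r1 i"
    and r2: "r2 < 2*m" "level r2 j \<noteq> level r2 i"
    by blast
  have row: "card (?C 0 0) + card (?C 0 1) = m"
    using card_level_classes[OF assms, of 0] by simp
  have "level r1 i = 0 \<or> level r1 i = 1" "level r2 i = 0 \<or> level r2 i = 1"
    using level_le_1[OF r1(1) assms(1)] level_le_1[OF r2(1) assms(1)] by linarith+
  then have "r1 \<in> ?C 0 0 \<or> r1 \<in> ?C 1 1" "r2 \<in> ?C 0 1 \<or> r2 \<in> ?C 1 0"
    using r1 r2 level_le_1[OF r2(1) assms(2)] unfolding level_class_def by auto
  then have "m \<le> 2 * card (?C 0 0)" "m \<le> 2 * card (?C 0 1)"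
    using level_class_opposite_bound(1)[OF _ assms] card_level_class_opposite[OF assms] by fastforce+
  then have "real m ^ 2 / 2 \<le> real (num_pairs_at_dist (2*m) m S (m - 2))"
    using row by (intro balanced_level_classes_many_close_pairs[OF assms]) linarith+
  then show False
    using few_close_pairs by linarith
qed

definition low_rows :: "nat set"
  where "low_rows = {r. r < 2*m \<and> level r 0 = 0}"

definition residue :: "nat \<Rightarrow> nat \<Rightarrow> nat"
  where "residue r j = (X r j - 1) mod m + 1"

lemma column_eq_level_residue:
  assumes "r < 2*m" "j < m"
  shows "X r j = m * level r j + residue r j"
  using column_range[OF assms] div_mult_mod_eq[of "X r j - 1" m]
  unfolding level_def residue_def by (simp add: mult.commute)

lemma card_low_rows: "0 < m \<Longrightarrow> card low_rows = m"
  unfolding low_rows_def by (rule card_level) simp_all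

lemma column_diff_low_rows:
  assumes "r \<in> low_rows" "r' \<in> low_rows" "j < m"
  shows "real (X r j) - real (X r' j) = real (residue r j) - real (residue r' j)"
proof -
  have r: "r < 2*m" "level r 0 = 0" and r': "r' < 2*m" "level r' 0 = 0"
    using assms(1,2) unfolding low_rows_def by simp_all
  have "0 < m"
    using assms(3) by simp
  from levels_aligned[OF this assms(3)] have "level r j = level r' j"
  proof (elim disjE)
    assume "\<forall>s<2*m. level s j \<noteq> level s 0"
    then have "level r j \<noteq> 0" "level r' j \<noteq> 0"
      using r r' by auto
    then show ?thesis
      using level_le_1[OF r(1) assms(3)] level_le_1[OF r'(1) assms(3)] by linarith
  qed (use r r' in simp_all)
  then show ?thesis
    using column_eq_level_residue[OF r(1) assms(3)] column_eq_level_residue[OF r'(1) assms(3)]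
    by simp
qed

lemma bij_betw_residue_low_rows:
  assumes "j < m"
  shows "bij_betw (\<lambda>r. residue r j) low_rows {1..m}"
proof -
  have "inj_on (\<lambda>r. residue r j) low_rows"
  proof (rule inj_onI)
    fix r r' assume "r \<in> low_rows" "r' \<in> low_rows" "residue r j = residue r' j"
    then have "X r j = X r' j" "r < 2*m" "r' < 2*m"
      using column_diff_low_rows[OF _ _ assms, of r r'] unfolding low_rows_def by simp_all
    then show "r = r'"
      using bij_betw_column[OF assms] by (auto simp: bij_betw_def dest: inj_onD)
  qed
  moreover have "(\<lambda>r. residue r j) ` low_rows \<subseteq> {1..m}"
    using assms by (auto simp: residue_def Suc_le_eq)
  moreover have "card ((\<lambda>r. residue r j) ` low_rows) = card {1..m}"
    using card_image[OF calculation(1)] card_low_rows assms by simp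
  ultimately show ?thesis
    unfolding bij_betw_def by (simp add: card_subset_eq)
qed

lemma sum_pairs_low_rows:
  "(\<Sum>r\<in>low_rows. \<Sum>r'\<in>low_rows. \<Sum>k<m. f (real (X r k) - real (X r' k)))
    = real m * (\<Sum>a\<in>{1..m}. \<Sum>b\<in>{1..m}. f (real a - real b))"
proof -
  have "(\<Sum>r\<in>low_rows. \<Sum>r'\<in>low_rows. \<Sum>k<m. f (real (X r k) - real (X r' k)))
      = (\<Sum>k<m. \<Sum>r\<in>low_rows. \<Sum>r'\<in>low_rows. f (real (X r k) - real (X r' k)))"
    by (simp add: sum.swap[where A = "{..<m}"])
  also have "\<dots> = (\<Sum>k<m. \<Sum>r\<in>low_rows. \<Sum>r'\<in>low_rows. f (real (residue r k) - real (residue r' k)))"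
    using column_diff_low_rows by (intro sum.cong) simp_all
  also have "\<dots> = (\<Sum>k<m. \<Sum>a\<in>{1..m}. \<Sum>b\<in>{1..m}. f (real a - real b))"
    using bij_betw_residue_low_rows
    by (intro sum.cong refl sum_pairs_reindex_bij_betw[where f = "\<lambda>a b. f (real a - real b)"]) simp
  finally show ?thesis
    by simp
qed

lemma low_rows_average_bound:
  assumes "0 < m" and "f 0 = 0"
    and "\<And>r r'. r \<in> low_rows \<Longrightarrow> r' \<in> low_rows \<Longrightarrow> r \<noteq> r'
      \<Longrightarrow> c \<le> (\<Sum>k<m. f (real (X r k) - real (X r' k)))"
  shows "real m * (real m - 1) * c \<le> real m * (\<Sum>a\<in>{1..m}. \<Sum>b\<in>{1..m}. f (real a - real b))"
  using card_mult_le_sum_pairs[of low_rows "\<lambda>r r'. \<Sum>k<m. f (real (X r k) - real (X r' k))" c]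
    assms card_low_rows[OF assms(1)] sum_pairs_low_rows
  by (simp add: low_rows_def)

lemma d_q_1_bound:
  assumes "2 \<le> m"
  shows "d_q 1 (2*m) m X \<le> real ((m + 1) * m div 3)"
proof -
  let ?d = "d_q 1 (2*m) m X"
  obtain i j where "?d = row_dist_q 1 m X i j"
    using d_q_attained assms by fastforce
  then have integral: "?d = real (\<Sum>k<m. max (X i k) (X j k) - min (X i k) (X j k))"
    by (simp add: row_dist_q_1 abs_diff_of_nat)
  have "real m * (real m - 1) * ?d \<le> real m * (\<Sum>a\<in>{1..m}. \<Sum>b\<in>{1..m}. \<bar>real a - real b\<bar>)"
    using assms d_q_le_row_dist_q[of _ "2*m" _ 1 m X]
    by (intro low_rows_average_bound) (auto simp: low_rows_def row_dist_q_1)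
  also have "\<dots> = real m * ((real m ^ 3 - real m) / 3)"
    using sum_pairs_abs_diff[of m] by simp
  also have "\<dots> = real m * (real m - 1) * (real m * (real m + 1) / 3)"
    by (simp add: field_simps power3_eq_cube)
  finally have "3 * ?d \<le> real m * (real m + 1)"
    using assms by (simp add: mult_le_cancel_left_pos)
  then show ?thesis
    unfolding integral by (intro of_nat_le_of_nat_div) (simp_all add: algebra_simps)
qed

lemma d_q_2_bound:
  assumes "2 \<le> m"
  shows "d_q 2 (2*m) m X \<le> sqrt (real ((m^2 * (m + 1)) div 6))"
proof -
  let ?d = "d_q 2 (2*m) m X"
  obtain i j where "?d = row_dist_q 2 m X i j"
    using d_q_attained assms by fastforce
  then have integral: "?d ^ 2 = real (\<Sum>k<m. (max (X i k) (X j k) - min (X i k) (X j k)) ^ 2)"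
    by (simp add: row_dist_q_2 sum_nonneg flip: abs_diff_of_nat)
  have "?d ^ 2 \<le> (\<Sum>k<m. (real (X r k) - real (X r' k))^2)"
    if "r < 2*m" "r' < 2*m" "r \<noteq> r'" for r r'
  proof -
    have "0 \<le> ?d"
      using \<open>?d = row_dist_q 2 m X i j\<close> by (simp add: row_dist_q_2 sum_nonneg)
    moreover have "?d \<le> sqrt (\<Sum>k<m. (real (X r k) - real (X r' k))^2)"
      using d_q_le_row_dist_q[OF that, where q = 2 and p = m and X = X] by (simp add: row_dist_q_2)
    ultimately have "?d ^ 2 \<le> (sqrt (\<Sum>k<m. (real (X r k) - real (X r' k))^2)) ^ 2"
      by (intro power_mono)
    then show ?thesis
      by (simp add: sum_nonneg)
  qed
  then have "real m * (real m - 1) * ?d ^ 2 \<le> real m * (\<Sum>a\<in>{1..m}. \<Sum>b\<in>{1..m}. (real a - real b)^2)"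
    using assms by (intro low_rows_average_bound) (auto simp: low_rows_def)
  also have "\<dots> = real m * ((real m ^ 4 - real m ^ 2) / 6)"
    using sum_pairs_diff_squared[of m] by simp
  also have "\<dots> = real m * (real m - 1) * (real m ^ 2 * (real m + 1) / 6)"
    by (simp add: field_simps power2_eq_square power4_eq_xxxx)
  finally have "6 * ?d ^ 2 \<le> real m ^ 2 * (real m + 1)"
    using assms by (simp add: mult_le_cancel_left_pos)
  then have "?d ^ 2 \<le> real ((m^2 * (m + 1)) div 6)"
    unfolding integral by (intro of_nat_le_of_nat_div) (simp_all add: algebra_simps)
  then show ?thesis
    by (simp add: real_le_rsqrt)
qed

end

theorem lemma5:
  fixes m :: nat and X S :: "nat \<Rightarrow> nat \<Rightarrow> nat"
  assumes "m \<ge> 3"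
    and "marginally_coupled m X S"
    and "d_H (2*m) m S \<ge> m - 2"
    and "real (num_pairs_at_dist (2*m) m S (m - 2)) < real m ^ 2 / 2"
  shows "d_q 1 (2*m) m X \<le> real (((m + 1) * m) div 3) \<and>
         d_q 2 (2*m) m X \<le> sqrt (real ((m^2 * (m + 1)) div 6))"
proof -
  interpret coupled_design_few_close_pairs m X S
    using assms(2-4) by unfold_locales
  show ?thesis
    using d_q_1_bound d_q_2_bound assms(1) by simp
qed

end
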